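(* Let $f=f(x_1,\ldots,x_n)$ be a positive non-canalyzing Boolean function such that for every $i\in[n]$ both restrictions $f_{|x_i=0}$ and $f_{|x_i=1}$ are canalyzing. Then $f$ has at least $n+2$ extremal points.
   Context: $B=\{0,1\}$, $\preceq$ coordinatewise order on $B^n$. $f$ is positive if $f(\mathbf{x})=1$ and $\mathbf{x}\preceq\mathbf{y}$ imply $f(\mathbf{y})=1$. Extremal points are the $\preceq$-maximal false points and the $\preceq$-minimal true points of $f$. $f_{|x_i=\alpha}$ is obtained by fixing $x_i=\alpha$. $f$ is canalyzing if for some $i$, $f_{|x_i=0}$ or $f_{|x_i=1}$ is constant. *)

theory Defs
  imports Main
begin

text \<open>Points of B^n are boolean lists of length n; False = 0, True = 1.\<close>

definition cube :: "nat \<Rightarrow> bool list set" where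
  "cube n = {xs. length xs = n}"

definition vle :: "bool list \<Rightarrow> bool list \<Rightarrow> bool" where
  "vle xs ys = list_all2 (\<le>) xs ys"

definition positive_bf :: "nat \<Rightarrow> (bool list \<Rightarrow> bool) \<Rightarrow> bool" where
  "positive_bf n f = (\<forall>x\<in>cube n. \<forall>y\<in>cube n. f x \<and> vle x y \<longrightarrow> f y)"

text \<open>Restriction f_{|x_i = a}: a function of the remaining n-1 variables
  (variable i, 0-based, is fixed to a).\<close>
definition restr :: "nat \<Rightarrow> bool \<Rightarrow> (bool list \<Rightarrow> bool) \<Rightarrow> bool list \<Rightarrow> bool" where
  "restr i a f = (\<lambda>ys. f (take i ys @ a # drop i ys))"

definition constant_bf :: "nat \<Rightarrow> (bool list \<Rightarrow> bool) \<Rightarrow> bool" where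
  "constant_bf m g = (\<forall>x\<in>cube m. \<forall>y\<in>cube m. g x = g y)"

definition canalyzing :: "nat \<Rightarrow> (bool list \<Rightarrow> bool) \<Rightarrow> bool" where
  "canalyzing n f = (\<exists>i<n. constant_bf (n - 1) (restr i False f)
                          \<or> constant_bf (n - 1) (restr i True f))"

definition max_false_points :: "nat \<Rightarrow> (bool list \<Rightarrow> bool) \<Rightarrow> bool list set" where
  "max_false_points n f = {x \<in> cube n. \<not> f x \<and>
     (\<forall>y\<in>cube n. vle x y \<and> \<not> f y \<longrightarrow> y = x)}"

definition min_true_points :: "nat \<Rightarrow> (bool list \<Rightarrow> bool) \<Rightarrow> bool list set" where
  "min_true_points n f = {x \<in> cube n. f x \<and>
     (\<forall>y\<in>cube n. vle y x \<and> f y \<longrightarrow> y = x)}"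

definition extremal_points :: "nat \<Rightarrow> (bool list \<Rightarrow> bool) \<Rightarrow> bool list set" where
  "extremal_points n f = max_false_points n f \<union> min_true_points n f"

end

theory Submission
  imports Defs
begin

text \<open>
  Identify a point of \<open>B\<^sup>n\<close> with the set of its true coordinates. If \<open>f\<close> is positive and
  no restriction \<open>f|x\<^sub>i=a\<close> is constant, then all singletons are false and all
  co-singletons true, so every true pair is a minimal true point and every false co-pair
  \<open>[n] - {i,j}\<close> a maximal false point. For \<open>n \<le> 4\<close> all pairs, together with the singletons when
  \<open>n = 3\<close>, are then extremal, which suffices (\<open>n \<le> 2\<close> is impossible).
  For \<open>n \<ge> 5\<close> the canalyzing restrictions \<open>f|x\<^sub>i=1\<close> and \<open>f|x\<^sub>i=0\<close> make every variable lie
  on a true pair and on a false co-pair; a fresh fifth variable shows that no two true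
  pairs (and no two false co-pairs) are disjoint. An intersecting family of edges covering
  \<open>n\<close> vertices has at least \<open>n - 1\<close> members, which gives \<open>2n - 2 \<ge> n + 2\<close> extremal points.
\<close>

definition point_of :: "nat \<Rightarrow> nat set \<Rightarrow> bool list" where
  "point_of n S = map (\<lambda>k. k \<in> S) [0..<n]"

lemma point_of_in_cube [simp]: "point_of n S \<in> cube n"
  by (simp add: point_of_def cube_def)

lemma length_point_of [simp]: "length (point_of n S) = n"
  by (simp add: point_of_def)

lemma nth_point_of [simp]: "k < n \<Longrightarrow> point_of n S ! k = (k \<in> S)"
  by (simp add: point_of_def)

lemma point_of_inject:
  "S \<subseteq> {..<n} \<Longrightarrow> T \<subseteq> {..<n} \<Longrightarrow> point_of n S = point_of n T \<Longrightarrow> S = T"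
  unfolding point_of_def by (auto simp: map_eq_conv)

lemma finite_cube: "finite (cube n)"
proof -
  have "cube n = {xs. set xs \<subseteq> UNIV \<and> length xs = n}"
    by (auto simp: cube_def)
  then show ?thesis
    using finite_lists_length_eq[of "UNIV :: bool set" n] by simp
qed

lemma vle_iff_nth:
  "x \<in> cube n \<Longrightarrow> y \<in> cube n \<Longrightarrow> vle x y \<longleftrightarrow> (\<forall>k<n. x ! k \<longrightarrow> y ! k)"
  by (auto simp: vle_def cube_def list_all2_conv_all_nth le_bool_def)

lemma positive_bfD:
  "positive_bf n f \<Longrightarrow> x \<in> cube n \<Longrightarrow> y \<in> cube n \<Longrightarrow> (\<forall>k<n. x ! k \<longrightarrow> y ! k) \<Longrightarrow> f x \<Longrightarrow> f y"
  unfolding positive_bf_def using vle_iff_nth by blast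

lemma positive_bf_point_of_mono:
  "positive_bf n f \<Longrightarrow> S \<inter> {..<n} \<subseteq> T \<Longrightarrow> f (point_of n S) \<Longrightarrow> f (point_of n T)"
  by (rule positive_bfD[of n f "point_of n S" "point_of n T"]) auto

lemma min_true_points_point_ofI:
  assumes pos: "positive_bf n f" and T: "T \<subseteq> {..<n}" "f (point_of n T)"
    and below_false: "\<forall>k\<in>T. \<not> f (point_of n (T - {k}))"
  shows "point_of n T \<in> min_true_points n f"
  unfolding min_true_points_def
proof (intro CollectI conjI ballI impI)
  fix y assume y: "y \<in> cube n" "vle y (point_of n T) \<and> f y"
  have y_sub: "\<forall>k<n. y ! k \<longrightarrow> k \<in> T"
    using y vle_iff_nth[of y n "point_of n T"] by auto
  have "y ! k" if k: "k \<in> T" for k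
  proof (rule ccontr)
    assume "\<not> y ! k"
    then have "f (point_of n (T - {k}))"
      by (intro positive_bfD[OF pos y(1) point_of_in_cube _ conjunct2[OF y(2)]]) (use y_sub T in auto)
    then show False using below_false k by blast
  qed
  then show "y = point_of n T"
    using y_sub y T by (intro nth_equalityI) (auto simp: cube_def)
qed (use T in auto)

lemma max_false_points_point_ofI:
  assumes pos: "positive_bf n f" and T: "T \<subseteq> {..<n}" "\<not> f (point_of n T)"
    and above_true: "\<forall>k<n. k \<notin> T \<longrightarrow> f (point_of n (insert k T))"
  shows "point_of n T \<in> max_false_points n f"
  unfolding max_false_points_def
proof (intro CollectI conjI ballI impI)
  fix y assume y: "y \<in> cube n" "vle (point_of n T) y \<and> \<not> f y"
  have T_sub: "\<forall>k<n. k \<in> T \<longrightarrow> y ! k"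
    using y vle_iff_nth[of "point_of n T" n y] by auto
  have "\<not> y ! k" if k: "k < n" "k \<notin> T" for k
  proof
    assume "y ! k"
    then have "f y"
      using positive_bfD[OF pos _ y(1) _ above_true[rule_format, OF k]] T_sub k by auto
    then show False using y by blast
  qed
  then show "y = point_of n T"
    using T_sub y T by (intro nth_equalityI) (auto simp: cube_def)
qed (use T in auto)

lemma card_extremal_points:
  "card (extremal_points n f) = card (min_true_points n f) + card (max_false_points n f)"
proof -
  have "finite (min_true_points n f)" "finite (max_false_points n f)"
    by (rule finite_subset[OF _ finite_cube], auto simp: min_true_points_def max_false_points_def)+
  moreover have "min_true_points n f \<inter> max_false_points n f = {}"
    by (auto simp: min_true_points_def max_false_points_def)
  ultimately show ?thesis
    unfolding extremal_points_def using card_Un_disjoint by (metis Un_commute)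
qed

lemma finite_extremal_points: "finite (extremal_points n f)"
  by (rule finite_subset[OF _ finite_cube])
    (auto simp: extremal_points_def min_true_points_def max_false_points_def)

definition remove_nth :: "nat \<Rightarrow> 'a list \<Rightarrow> 'a list" where
  "remove_nth i xs = take i xs @ drop (Suc i) xs"

lemma length_remove_nth: "i < length xs \<Longrightarrow> length (remove_nth i xs) = length xs - 1"
  by (simp add: remove_nth_def)

lemma insert_nth_remove_nth:
  "i < length xs \<Longrightarrow> take i (remove_nth i xs) @ xs ! i # drop i (remove_nth i xs) = xs"
  by (simp add: remove_nth_def id_take_nth_drop[symmetric])

lemma nth_remove_nth:
  "i < length xs \<Longrightarrow> j < length xs - 1 \<Longrightarrow> remove_nth i xs ! j = xs ! (if j < i then j else Suc j)"
  by (auto simp: remove_nth_def nth_append min_def)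

lemma restr_remove_nth:
  "i < length p \<Longrightarrow> p ! i = a \<Longrightarrow> restr i a f (remove_nth i p) = f p"
  unfolding restr_def using insert_nth_remove_nth[of i p] by simp

lemma not_constant_restr:
  assumes "i < n" "\<not> constant_bf (n - 1) (restr i a f)"
  shows "\<exists>p\<in>cube n. p ! i = a \<and> f p" "\<exists>q\<in>cube n. q ! i = a \<and> \<not> f q"
proof -
  obtain x y where xy: "x \<in> cube (n - 1)" "y \<in> cube (n - 1)" "restr i a f x \<noteq> restr i a f y"
    using assms(2) unfolding constant_bf_def by blast
  have extend: "take i z @ a # drop i z \<in> cube n \<and> (take i z @ a # drop i z) ! i = a"
    if "z \<in> cube (n - 1)" for z
    using that assms(1) by (auto simp: cube_def nth_append min_def)
  show "\<exists>p\<in>cube n. p ! i = a \<and> f p" "\<exists>q\<in>cube n. q ! i = a \<and> \<not> f q"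
    using extend[OF xy(1)] extend[OF xy(2)] xy(3) unfolding restr_def by metis+
qed

lemma constant_restr_restr:
  assumes "i < n" "j < n - 1" "constant_bf (n - 1 - 1) (restr j a (restr i b f))"
  obtains k where "k < n" "k \<noteq> i"
    "\<And>p q. p \<in> cube n \<Longrightarrow> q \<in> cube n \<Longrightarrow> p ! i = b \<Longrightarrow> q ! i = b \<Longrightarrow> p ! k = a \<Longrightarrow> q ! k = a \<Longrightarrow> f p = f q"
proof
  define k where "k = (if j < i then j else Suc j)"
  have reduce: "restr j a (restr i b f) (remove_nth j (remove_nth i p)) = f p
      \<and> remove_nth j (remove_nth i p) \<in> cube (n - 1 - 1)"
    if p: "p \<in> cube n" "p ! i = b" "p ! k = a" for p
  proof -
    have len: "length p = n" "length (remove_nth i p) = n - 1"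
      using p assms by (simp_all add: cube_def length_remove_nth)
    have "remove_nth i p ! j = a"
      using nth_remove_nth[of i p j] assms len p k_def by simp
    then have "restr j a (restr i b f) (remove_nth j (remove_nth i p)) = restr i b f (remove_nth i p)"
      using restr_remove_nth[of j "remove_nth i p"] len assms by simp
    also have "\<dots> = f p"
      using restr_remove_nth[of i p] len assms p by simp
    finally show ?thesis
      using len assms by (simp add: cube_def length_remove_nth)
  qed
  show "k < n" "k \<noteq> i" using assms k_def by auto
  show "f p = f q" if "p \<in> cube n" "q \<in> cube n" "p ! i = b" "q ! i = b" "p ! k = a" "q ! k = a" for p q
    using reduce[of p] reduce[of q] that assms(3) unfolding constant_bf_def by metis
qed

text \<open>A graph on \<open>{..<n}\<close> without isolated vertices and without two disjoint edges is a
  star or a triangle; in either case it has at least \<open>n - 1\<close> edges.\<close>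

lemma card_intersecting_edges:
  fixes G :: "nat \<Rightarrow> nat \<Rightarrow> bool"
  assumes n: "n \<ge> 1"
    and no_isolated: "\<forall>i<n. \<exists>j. G i j"
    and G: "\<And>i j. G i j \<Longrightarrow> i < n \<and> j < n \<and> i \<noteq> j"
    and intersecting: "\<And>a b c d. G a b \<Longrightarrow> G c d \<Longrightarrow> {a, b} \<inter> {c, d} \<noteq> {}"
  shows "n - 1 \<le> card {{i, j} | i j. G i j}"
proof -
  let ?E = "{{i, j} | i j. G i j}"
  obtain b where b: "G 0 b" using no_isolated n by auto
  obtain w where w: "\<And>v. v < n \<Longrightarrow> G v (w v)" using no_isolated by metis
  define edge where "edge v = (if v = b then {0, b} else {v, w v})" for v
  have w_hub: "w v \<in> {0, b}" if "v < n" "v \<noteq> 0" "v \<noteq> b" for v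
    using intersecting[OF b w[OF that(1)]] that G[OF w[OF that(1)]] by auto
  have inj: "inj_on edge ({..<n} - {0})"
  proof (rule inj_onI)
    fix x y assume x: "x \<in> {..<n} - {0}" and y: "y \<in> {..<n} - {0}" and e: "edge x = edge y"
    then show "x = y"
      using w_hub[of x] w_hub[of y] G[OF w, of x] G[OF w, of y] unfolding edge_def
      by (auto simp: doubleton_eq_iff split: if_splits)
  qed
  have "n - 1 = card (edge ` ({..<n} - {0}))"
    using card_image[OF inj] n by simp
  also have "\<dots> \<le> card ?E"
  proof (rule card_mono)
    show "finite ?E"
      by (rule finite_subset[of _ "Pow {..<n}"]) (auto dest: G)
    show "edge ` ({..<n} - {0}) \<subseteq> ?E"
      using b w unfolding edge_def by auto
  qed
  finally show ?thesis .
qed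

locale positive_noncanalyzing =
  fixes n :: nat and f :: "bool list \<Rightarrow> bool"
  assumes n_ge_1: "n \<ge> 1"
    and positive: "positive_bf n f"
    and noncanalyzing: "\<not> canalyzing n f"
begin

lemma restr_not_constant: "i < n \<Longrightarrow> \<not> constant_bf (n - 1) (restr i a f)"
  using noncanalyzing unfolding canalyzing_def by (cases a) auto

lemma true_cosingleton: assumes "k < n" shows "f (point_of n ({..<n} - {k}))"
proof -
  obtain p where p: "p \<in> cube n" "\<not> p ! k" "f p"
    using not_constant_restr(1)[OF assms restr_not_constant[OF assms]] by blast
  show ?thesis
    by (rule positive_bfD[OF positive p(1) _ _ p(3)]) (use p assms in \<open>auto simp: cube_def\<close>)
qed

lemma false_singleton: assumes "k < n" shows "\<not> f (point_of n {k})"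
proof
  assume true_k: "f (point_of n {k})"
  obtain q where q: "q \<in> cube n" "q ! k" "\<not> f q"
    using not_constant_restr(2)[OF assms restr_not_constant[OF assms]] by blast
  have "f q" by (rule positive_bfD[OF positive _ q(1) _ true_k]) (use q assms in auto)
  then show False using q by blast
qed

lemma n_ge_3: "n \<ge> 3"
proof (rule ccontr)
  assume "\<not> n \<ge> 3"
  then consider "n = 1" | "n = 2" using n_ge_1 by linarith
  then show False
  proof cases
    case 1
    then have "canalyzing n f" by (simp add: canalyzing_def constant_bf_def cube_def)
    then show False using noncanalyzing by blast
  next
    case 2
    then have "{..<n} - {1} = {0}" by auto
    then show False using false_singleton[of 0] true_cosingleton[of 1] 2 by simp
  qed
qed

lemma true_large: assumes "T \<subseteq> {..<n}" "card T \<ge> n - 1" shows "f (point_of n T)"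
proof (cases "T = {..<n}")
  case True
  then show ?thesis
    using positive_bf_point_of_mono[OF positive _ true_cosingleton[of 0]] n_ge_1 by auto
next
  case False
  then obtain l where l: "l < n" "l \<notin> T" using assms(1) by blast
  have sub: "T \<subseteq> {..<n} - {l}" using assms(1) l by auto
  then have "card T = card ({..<n} - {l})"
    using card_mono[OF _ sub] assms(2) l by simp
  then have "T = {..<n} - {l}"
    using card_subset_eq[OF _ sub] by simp
  then show ?thesis using true_cosingleton l by simp
qed

lemma false_small: assumes "T \<subseteq> {..<n}" "card T \<le> 1" shows "\<not> f (point_of n T)"
proof
  assume true_T: "f (point_of n T)"
  obtain k where "k < n" "T \<subseteq> {k}"
  proof (cases "T = {}")
    case True
    then show ?thesis using that[of 0] n_ge_1 by auto
  next
    case False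
    then obtain k where k: "k \<in> T" by blast
    have "finite T" using assms(1) finite_subset by blast
    then have "T \<subseteq> {k}" using card_le_Suc0_iff_eq assms(2) k by auto
    then show ?thesis using that[of k] assms(1) k by auto
  qed
  then show False
    using false_singleton positive_bf_point_of_mono[OF positive _ true_T] by blast
qed

lemma true_pair_min_true:
  assumes "i < n" "j < n" "i \<noteq> j" "f (point_of n {i, j})"
  shows "point_of n {i, j} \<in> min_true_points n f"
  using assms by (intro min_true_points_point_ofI positive ballI false_small) auto

lemma false_copair_max_false:
  assumes "i < n" "j < n" "i \<noteq> j" "\<not> f (point_of n ({..<n} - {i, j}))"
  shows "point_of n ({..<n} - {i, j}) \<in> max_false_points n f"
proof (intro max_false_points_point_ofI positive allI impI)
  fix k assume "k < n" "k \<notin> {..<n} - {i, j}"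
  then have "insert k ({..<n} - {i, j}) = {..<n} - {if k = i then j else i}"
    using assms by auto
  then show "f (point_of n (insert k ({..<n} - {i, j})))"
    using true_cosingleton assms by simp
qed (use assms in auto)

lemma card_extremal_points_n3: assumes "n = 3" shows "n + 2 \<le> card (extremal_points n f)"
proof -
  have pair: "point_of n {i, j} \<in> extremal_points n f" if "i < n" "j < n" "i \<noteq> j" for i j
  proof -
    have "f (point_of n {i, j})" by (rule true_large) (use that assms in auto)
    then show ?thesis using true_pair_min_true that unfolding extremal_points_def by auto
  qed
  have singleton: "point_of n {i} \<in> extremal_points n f" if "i < n" for i
  proof -
    have "point_of n {i} \<in> max_false_points n f"
    proof (rule max_false_points_point_ofI[OF positive])
      show "\<forall>k<n. k \<notin> {i} \<longrightarrow> f (point_of n (insert k {i}))"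
        using that assms by (intro allI impI true_large) auto
    qed (use that false_singleton in auto)
    then show ?thesis unfolding extremal_points_def by auto
  qed
  let ?P = "{point_of n {0, 1}, point_of n {0, 2}, point_of n {1, 2},
             point_of n {0}, point_of n {1}, point_of n {2}}"
  have "?P \<subseteq> extremal_points n f"
    using assms by (intro insert_subsetI empty_subsetI pair singleton) auto
  moreover have "card ?P = 6"
    unfolding assms by (simp add: point_of_def upt_rec)
  ultimately have "6 \<le> card (extremal_points n f)"
    using card_mono[OF finite_extremal_points] by metis
  then show ?thesis using assms by simp
qed

lemma card_extremal_points_n4: assumes "n = 4" shows "n + 2 \<le> card (extremal_points n f)"
proof -
  have pair: "point_of n {i, j} \<in> extremal_points n f" if ij: "i < n" "j < n" "i \<noteq> j" for i j
  proof (cases "f (point_of n {i, j})")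
    case True
    then show ?thesis using true_pair_min_true ij unfolding extremal_points_def by auto
  next
    case False
    then have "point_of n {i, j} \<in> max_false_points n f"
      using ij assms by (intro max_false_points_point_ofI positive allI impI true_large)
        (auto simp: card_insert_if)
    then show ?thesis unfolding extremal_points_def by auto
  qed
  let ?P = "{point_of n {0, 1}, point_of n {0, 2}, point_of n {0, 3},
             point_of n {1, 2}, point_of n {1, 3}, point_of n {2, 3}}"
  have "?P \<subseteq> extremal_points n f"
    using assms by (intro insert_subsetI empty_subsetI pair) auto
  moreover have "card ?P = 6"
    unfolding assms by (simp add: point_of_def upt_rec)
  ultimately have "6 \<le> card (extremal_points n f)"
    using card_mono[OF finite_extremal_points] by metis
  then show ?thesis using assms by simp
qed

end

locale minimal_noncanalyzing = positive_noncanalyzing +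
  assumes restr_canalyzing:
    "\<And>i. i < n \<Longrightarrow> canalyzing (n - 1) (restr i False f) \<and> canalyzing (n - 1) (restr i True f)"
begin

definition true_pair :: "nat \<Rightarrow> nat \<Rightarrow> bool" where
  "true_pair i j \<longleftrightarrow> i < n \<and> j < n \<and> i \<noteq> j \<and> f (point_of n {i, j})"

definition false_copair :: "nat \<Rightarrow> nat \<Rightarrow> bool" where
  "false_copair i j \<longleftrightarrow> i < n \<and> j < n \<and> i \<noteq> j \<and> \<not> f (point_of n ({..<n} - {i, j}))"

lemma constant_subcubeE:
  assumes "i < n"
  obtains k a where "k < n" "k \<noteq> i"
    "\<And>p q. p \<in> cube n \<Longrightarrow> q \<in> cube n \<Longrightarrow> p ! i = b \<Longrightarrow> q ! i = b \<Longrightarrow> p ! k = a \<Longrightarrow> q ! k = a \<Longrightarrow> f p = f q"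
proof -
  have "canalyzing (n - 1) (restr i b f)"
    using restr_canalyzing[OF assms] by (cases b) auto
  then obtain j a where j: "j < n - 1" and const: "constant_bf (n - 1 - 1) (restr j a (restr i b f))"
    unfolding canalyzing_def by blast
  show ?thesis
    by (rule constant_restr_restr[OF assms j const]) (rule that, assumption+)
qed

text \<open>Fixing a second variable to \<open>0\<close> in \<open>f|x\<^sub>i=1\<close> cannot give a constant, since the subcube
  contains the false point \<open>{i}\<close> and the true point \<open>[n] - {k}\<close>; so it is fixed to \<open>1\<close>,
  and the subcube then contains \<open>{i, k}\<close> and the true point \<open>[n]\<close>.\<close>

lemma true_pair_exists: assumes "i < n" shows "\<exists>j. true_pair i j"
proof -
  obtain k a where k: "k < n" "k \<noteq> i" and const:
    "\<And>p q. p \<in> cube n \<Longrightarrow> q \<in> cube n \<Longrightarrow> p ! i \<Longrightarrow> q ! i \<Longrightarrow> p ! k = a \<Longrightarrow> q ! k = a \<Longrightarrow> f p = f q"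
    using constant_subcubeE[OF assms, of True] by (metis (full_types))
  show ?thesis
  proof (cases a)
    case True
    then have "f (point_of n {i, k}) = f (point_of n {..<n})"
      using const assms k by simp
    then show ?thesis
      using true_large[of "{..<n}"] assms k unfolding true_pair_def by auto
  next
    case False
    then have "f (point_of n {i}) = f (point_of n ({..<n} - {k}))"
      using const assms k by simp
    then show ?thesis using false_singleton[OF assms] true_cosingleton[OF k(1)] by simp
  qed
qed

lemma false_copair_exists: assumes "i < n" shows "\<exists>j. false_copair i j"
proof -
  obtain k a where k: "k < n" "k \<noteq> i" and const:
    "\<And>p q. p \<in> cube n \<Longrightarrow> q \<in> cube n \<Longrightarrow> \<not> p ! i \<Longrightarrow> \<not> q ! i \<Longrightarrow> p ! k = a \<Longrightarrow> q ! k = a \<Longrightarrow> f p = f q"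
    using constant_subcubeE[OF assms, of False] by (metis (full_types))
  show ?thesis
  proof (cases a)
    case False
    then have "f (point_of n ({..<n} - {i, k})) = f (point_of n {})"
      using const assms k by simp
    then show ?thesis
      using false_small[of "{}"] assms k unfolding false_copair_def by auto
  next
    case True
    then have "f (point_of n {k}) = f (point_of n ({..<n} - {i}))"
      using const assms k by simp
    then show ?thesis using false_singleton[OF k(1)] true_cosingleton[OF assms] by simp
  qed
qed

lemma true_pair_meets_false_copair:
  "true_pair a b \<Longrightarrow> false_copair c d \<Longrightarrow> {a, b} \<inter> {c, d} \<noteq> {}"
  unfolding true_pair_def false_copair_def
  using positive_bf_point_of_mono[OF positive, of "{a, b}" "{..<n} - {c, d}"] by auto

lemma fresh_variable:
  assumes "n \<ge> 5" obtains v where "v < n" "v \<notin> {a, b, c, d}"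
proof -
  have "\<not> {..<n} \<subseteq> {a, b, c, d}"
  proof
    assume "{..<n} \<subseteq> {a, b, c, d}"
    then have "card {..<n} \<le> card {a, b, c, d}" by (intro card_mono) auto
    also have "\<dots> \<le> 4" by (simp add: card_insert_if)
    finally show False using assms by simp
  qed
  then show ?thesis using that by blast
qed

lemma true_pairs_intersect:
  assumes "n \<ge> 5" "true_pair a b" "true_pair c d" shows "{a, b} \<inter> {c, d} \<noteq> {}"
proof
  assume disjoint: "{a, b} \<inter> {c, d} = {}"
  obtain v where v: "v < n" "v \<notin> {a, b, c, d}" using fresh_variable[OF assms(1)] .
  obtain w where w: "false_copair v w" using false_copair_exists[OF v(1)] ..
  show False
    using true_pair_meets_false_copair[OF assms(2) w] true_pair_meets_false_copair[OF assms(3) w]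
      v disjoint by auto
qed

lemma false_copairs_intersect:
  assumes "n \<ge> 5" "false_copair a b" "false_copair c d" shows "{a, b} \<inter> {c, d} \<noteq> {}"
proof
  assume disjoint: "{a, b} \<inter> {c, d} = {}"
  obtain v where v: "v < n" "v \<notin> {a, b, c, d}" using fresh_variable[OF assms(1)] .
  obtain w where w: "true_pair v w" using true_pair_exists[OF v(1)] ..
  show False
    using true_pair_meets_false_copair[OF w assms(2)] true_pair_meets_false_copair[OF w assms(3)]
      v disjoint by auto
qed

lemma card_min_true_points_ge: assumes "n \<ge> 5" shows "n - 1 \<le> card (min_true_points n f)"
proof -
  let ?E = "{{i, j} | i j. true_pair i j}"
  have "n - 1 \<le> card ?E"
    using n_ge_1 true_pair_exists true_pairs_intersect[OF assms]
    by (intro card_intersecting_edges) (auto simp: true_pair_def)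
  also have "\<dots> = card (point_of n ` ?E)"
    by (rule card_image[symmetric], rule inj_onI, rule point_of_inject) (auto simp: true_pair_def)
  also have "\<dots> \<le> card (min_true_points n f)"
  proof (rule card_mono)
    show "finite (min_true_points n f)"
      by (rule finite_subset[OF _ finite_cube]) (auto simp: min_true_points_def)
    show "point_of n ` ?E \<subseteq> min_true_points n f"
      using true_pair_min_true by (auto simp: true_pair_def)
  qed
  finally show ?thesis .
qed

lemma card_max_false_points_ge: assumes "n \<ge> 5" shows "n - 1 \<le> card (max_false_points n f)"
proof -
  let ?E = "{{i, j} | i j. false_copair i j}"
  have "n - 1 \<le> card ?E"
    using n_ge_1 false_copair_exists false_copairs_intersect[OF assms]
    by (intro card_intersecting_edges) (auto simp: false_copair_def)
  also have "\<dots> = card ((\<lambda>S. point_of n ({..<n} - S)) ` ?E)"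
  proof (rule card_image[symmetric], rule inj_onI)
    fix S T assume "S \<in> ?E" "T \<in> ?E" "point_of n ({..<n} - S) = point_of n ({..<n} - T)"
    moreover from this have "{..<n} - S = {..<n} - T" by (intro point_of_inject) auto
    ultimately show "S = T" by (auto simp: false_copair_def)
  qed
  also have "\<dots> \<le> card (max_false_points n f)"
  proof (rule card_mono)
    show "finite (max_false_points n f)"
      by (rule finite_subset[OF _ finite_cube]) (auto simp: max_false_points_def)
    show "(\<lambda>S. point_of n ({..<n} - S)) ` ?E \<subseteq> max_false_points n f"
      using false_copair_max_false by (auto simp: false_copair_def)
  qed
  finally show ?thesis .
qed

lemma card_extremal_points_ge: "n + 2 \<le> card (extremal_points n f)"
proof -
  consider "n = 3" | "n = 4" | "n \<ge> 5" using n_ge_3 by linarith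
  then show ?thesis
  proof cases
    case 3
    then show ?thesis
      using card_min_true_points_ge card_max_false_points_ge card_extremal_points by fastforce
  qed (use card_extremal_points_n3 card_extremal_points_n4 in auto)
qed

end

theorem mainTheorem8:
  fixes n :: nat and f :: "bool list \<Rightarrow> bool"
  assumes "n \<ge> 1"
    and "positive_bf n f"
    and "\<not> canalyzing n f"
    and "\<forall>i<n. canalyzing (n - 1) (restr i False f) \<and> canalyzing (n - 1) (restr i True f)"
  shows "n + 2 \<le> card (extremal_points n f)"
proof -
  interpret minimal_noncanalyzing n f
    using assms by unfold_locales auto
  show ?thesis by (rule card_extremal_points_ge)
qed

end
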